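(* Assume in addition that all $X_t$ have the same expectation $\mu$. For all integers $t,\tau\ge1$ with $\min(t,\tau)\ge2$, all $\delta>0$ and all $\eta>0$, writing $S=\{\max(1,t-\tau+1),\dots,t\}$, $$\mathbb{P}\left(\sum_{s\in S}\epsilon_s>0,\ \frac{\sum_{s\in S}(X_s-\mu)\epsilon_s}{\sqrt{\sum_{s\in S}\epsilon_s}}>\delta\right)\le\left\lceil\frac{\log(\min(t,\tau))}{\log(1+\eta)}\right\rceil\exp\!\left(-\frac{2\delta^2}{B^2}\Big(1-\frac{\eta^2}{16}\Big)\right).$$
   Context: On a probability space $(\Omega,\mathcal A,\mathbb P)$, let $(X_t)_{t\ge1}$ be independent random variables with $X_t\in[0,B]$ a.s. Let $(\mathcal F_t)_{t\ge0}$ be a filtration with $\sigma(X_1,\dots,X_t)\subset\mathcal F_t$ and $X_s$ independent of $\mathcal F_t$ for $s>t$. Let $(\epsilon_t)_{t\ge1}$ be $\{0,1\}$-valued with $\epsilon_t$ $\mathcal F_{t-1}$-measurable. *)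

theory Defs
  imports "HOL-Probability.Probability"
begin

end

theory Submission
  imports Defs
begin

(*
  1. For lambda > 0 the process
       Z_n = exp (sum_{t0 <= s < n} eps_s (lambda (X_s - mu) - lambda^2 B^2 / 8))
     is a nonnegative supermartingale with Z_t0 = 1: each new factor X_n is independent of
     F_(n-1), to which Z_n and eps_n are measurable, and Hoeffding's lemma bounds its
     conditional growth.  Markov's inequality then gives P(Z_n >= e^g) <= e^-g.
  2. On the event of interest the count N = sum eps_s lies in [1, m] with m <= (1+eta)^D.
     Cutting [1, (1+eta)^D] into the D geometric slices [(1+eta)^k, (1+eta)^(k+1)] and
     choosing lambda_k adapted to slice k, a short real inequality shows that the event is
     covered by the D events {Z_n(lambda_k) >= exp gamma}, gamma = 2 delta^2/B^2 (1 - eta^2/16).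
  3. A union bound over the slices gives D exp(-gamma); for the window in the theorem
     D = ceil (ln (min t tau) / ln (1 + eta)) suffices.
*)

section \<open>Independence and integrals\<close>

lemma (in prob_space) indep_set_mono:
  assumes "indep_set A B" "A' \<subseteq> A" "B' \<subseteq> B"
  shows "indep_set A' B'"
  using assms unfolding indep_sets2_eq by blast

lemma (in prob_space) indep_set_integral_mult:
  assumes ind: "indep_set (sets (vimage_algebra (space M) Y borel)) (sets G)"
    and sub: "subalgebra M G"
    and Y: "Y \<in> borel_measurable M" and g: "g \<in> borel_measurable borel"
    and W: "W \<in> borel_measurable G"
    and int_g: "integrable M (\<lambda>\<omega>. g (Y \<omega>) :: real)" and int_W: "integrable M W"
  shows "(\<integral>\<omega>. g (Y \<omega>) * W \<omega> \<partial>M) = (\<integral>\<omega>. g (Y \<omega>) \<partial>M) * (\<integral>\<omega>. W \<omega> \<partial>M)"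
proof (rule indep_var_lebesgue_integral[OF _ int_g int_W])
  have space_G: "space G = space M" using sub by (simp add: subalgebra_def)
  interpret VY: sigma_algebra "space M" "sets (vimage_algebra (space M) Y borel)"
    using sets.sigma_algebra_axioms[of "vimage_algebra (space M) Y borel"] by simp
  interpret VG: sigma_algebra "space M" "sets G"
    using sets.sigma_algebra_axioms[of G] space_G by simp
  have sigma_gY: "sigma_sets (space M) {(\<lambda>\<omega>. g (Y \<omega>)) -` A \<inter> space M | A. A \<in> sets borel}
      \<subseteq> sets (vimage_algebra (space M) Y borel)"
  proof (rule VY.sigma_sets_subset, safe)
    fix A :: "real set" assume "A \<in> sets borel"
    then have "g -` A \<in> sets borel" using measurable_sets[OF g] by simp
    then have "Y -` (g -` A) \<inter> space M \<in> sets (vimage_algebra (space M) Y borel)"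
      unfolding sets_vimage_algebra by (intro sigma_sets.Basic) blast
    then show "(\<lambda>\<omega>. g (Y \<omega>)) -` A \<inter> space M \<in> sets (vimage_algebra (space M) Y borel)"
      by (simp add: vimage_def)
  qed
  have sigma_W: "sigma_sets (space M) {W -` A \<inter> space M | A. A \<in> sets borel} \<subseteq> sets G"
    by (rule VG.sigma_sets_subset) (use measurable_sets[OF W] space_G in auto)
  have "(\<lambda>\<omega>. g (Y \<omega>)) \<in> borel_measurable M" "W \<in> borel_measurable M"
    using g Y measurable_from_subalg[OF sub W] by measurable
  then show "indep_var borel (\<lambda>\<omega>. g (Y \<omega>)) borel W"
    unfolding indep_var_eq using indep_set_mono[OF ind sigma_gY sigma_W] by simp
qed

section \<open>The exponential supermartingale\<close>

locale predictable_sampling = prob_space M for M :: "'a measure" +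
  fixes X :: "nat \<Rightarrow> 'a \<Rightarrow> real" and eps :: "nat \<Rightarrow> 'a \<Rightarrow> real"
    and F :: "nat \<Rightarrow> 'a measure" and B \<mu> :: real
  assumes X_meas: "\<And>s. s \<ge> 1 \<Longrightarrow> X s \<in> borel_measurable M"
    and X_bdd: "\<And>s. s \<ge> 1 \<Longrightarrow> AE \<omega> in M. 0 \<le> X s \<omega> \<and> X s \<omega> \<le> B"
    and X_mean: "\<And>s. s \<ge> 1 \<Longrightarrow> integral\<^sup>L M (X s) = \<mu>"
    and F_filt: "filtration (space M) F"
    and F_sub: "\<And>n. subalgebra M (F n)"
    and F_adapt: "\<And>s n. 1 \<le> s \<Longrightarrow> s \<le> n \<Longrightarrow> X s \<in> borel_measurable (F n)"
    and F_indep: "\<And>s n. n < s \<Longrightarrow>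
        indep_set (sets (vimage_algebra (space M) (X s) borel)) (sets (F n))"
    and eps_01: "\<And>s \<omega>. s \<ge> 1 \<Longrightarrow> \<omega> \<in> space M \<Longrightarrow> eps s \<omega> \<in> {0, 1}"
    and eps_pred: "\<And>s. s \<ge> 1 \<Longrightarrow> eps s \<in> borel_measurable (F (s - 1))"
begin

definition increment :: "real \<Rightarrow> nat \<Rightarrow> 'a \<Rightarrow> real" where
  "increment l s \<omega> = l * (X s \<omega> - \<mu>) - l\<^sup>2 * B\<^sup>2 / 8"

definition exp_process :: "real \<Rightarrow> nat \<Rightarrow> nat \<Rightarrow> 'a \<Rightarrow> real" where
  "exp_process l t0 n \<omega> = exp (\<Sum>s\<in>{t0..<n}. eps s \<omega> * increment l s \<omega>)"

lemma eps_measurable_later: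
  assumes "1 \<le> s" "s \<le> n"
  shows "eps s \<in> borel_measurable (F (n - 1))"
proof -
  have "subalgebra (F (n - 1)) (F (s - 1))"
    using F_sub[of "n - 1"] F_sub[of "s - 1"] filtration.sets_F_mono[OF F_filt, of "s - 1" "n - 1"]
      assms by (auto simp: subalgebra_def)
  then show ?thesis using eps_pred[OF assms(1)] by (meson measurable_from_subalg)
qed

lemma exp_process_measurable:
  assumes "1 \<le> t0"
  shows "exp_process l t0 n \<in> borel_measurable (F (n - 1))"
proof -
  have "(\<lambda>\<omega>. eps s \<omega> * increment l s \<omega>) \<in> borel_measurable (F (n - 1))" if "s \<in> {t0..<n}" for s
  proof -
    have "eps s \<in> borel_measurable (F (n - 1))" "X s \<in> borel_measurable (F (n - 1))"
      using that assms eps_measurable_later[of s n] F_adapt[of s "n - 1"] by auto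
    then show ?thesis unfolding increment_def by measurable
  qed
  then show ?thesis unfolding exp_process_def by measurable
qed

lemma exp_process_borel: "1 \<le> t0 \<Longrightarrow> exp_process l t0 n \<in> borel_measurable M"
  using exp_process_measurable F_sub by (meson measurable_from_subalg)

lemma exp_process_nonneg: "0 \<le> exp_process l t0 n \<omega>"
  unfolding exp_process_def by simp

lemma increment_bound:
  assumes "s \<ge> 1"
  shows "AE \<omega> in M. \<bar>increment l s \<omega>\<bar> \<le> \<bar>l\<bar> * (\<bar>B\<bar> + \<bar>\<mu>\<bar>) + l\<^sup>2 * B\<^sup>2 / 8"
  using X_bdd[OF assms]
proof eventually_elim
  case (elim \<omega>)
  have "\<bar>X s \<omega> - \<mu>\<bar> \<le> \<bar>B\<bar> + \<bar>\<mu>\<bar>" using elim by arith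
  then have "\<bar>l * (X s \<omega> - \<mu>)\<bar> \<le> \<bar>l\<bar> * (\<bar>B\<bar> + \<bar>\<mu>\<bar>)"
    unfolding abs_mult by (intro mult_left_mono) auto
  moreover have "0 \<le> l\<^sup>2 * B\<^sup>2 / 8" by simp
  ultimately show ?case unfolding increment_def by arith
qed

lemma exp_increment_integrable:
  assumes "s \<ge> 1"
  shows "integrable M (\<lambda>\<omega>. exp (increment l s \<omega>))"
proof (rule integrable_const_bound)
  show "AE \<omega> in M. norm (exp (increment l s \<omega>)) \<le> exp (\<bar>l\<bar> * (\<bar>B\<bar> + \<bar>\<mu>\<bar>) + l\<^sup>2 * B\<^sup>2 / 8)"
    using increment_bound[OF assms, of l] by eventually_elim (simp add: abs_le_iff)
  show "(\<lambda>\<omega>. exp (increment l s \<omega>)) \<in> borel_measurable M"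
    using X_meas[OF assms] unfolding increment_def by measurable
qed

text \<open>The process is bounded on the finite horizon, hence integrable.\<close>

lemma exp_process_integrable:
  assumes "1 \<le> t0"
  shows "integrable M (exp_process l t0 n)"
proof -
  define K where "K = \<bar>l\<bar> * (\<bar>B\<bar> + \<bar>\<mu>\<bar>) + l\<^sup>2 * B\<^sup>2 / 8"
  have "AE \<omega> in M. \<forall>s\<in>{t0..<n}. \<bar>increment l s \<omega>\<bar> \<le> K"
    unfolding K_def using assms by (intro AE_finite_allI increment_bound) auto
  then have "AE \<omega> in M. norm (exp_process l t0 n \<omega>) \<le> exp (\<Sum>s\<in>{t0..<n}. K)"
    using AE_space
  proof eventually_elim
    case (elim \<omega>)
    have "eps s \<omega> * increment l s \<omega> \<le> K" if "s \<in> {t0..<n}" for s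
    proof -
      have "eps s \<omega> \<in> {0, 1}" using eps_01 that assms elim by auto
      moreover have "0 \<le> K" unfolding K_def by simp
      ultimately show ?thesis using elim that by (auto simp: abs_le_iff)
    qed
    then have "(\<Sum>s\<in>{t0..<n}. eps s \<omega> * increment l s \<omega>) \<le> (\<Sum>s\<in>{t0..<n}. K)"
      by (rule sum_mono)
    then show ?case unfolding exp_process_def by simp
  qed
  then show ?thesis by (intro integrable_const_bound exp_process_borel assms)
qed

text \<open>Hoeffding's lemma for one observation: the exponential increment has mean at most one.\<close>

lemma exp_increment_integral_le_1:
  assumes "s \<ge> 1" "l > 0"
  shows "(\<integral>\<omega>. exp (increment l s \<omega>) \<partial>M) \<le> 1"
proof -
  interpret I: interval_bounded_random_variable M "X s" 0 B
    using X_meas[OF assms(1)] X_bdd[OF assms(1)] by unfold_locales auto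
  have split: "exp (increment l s \<omega>) = exp (l * (X s \<omega> - \<mu>)) * exp (- (l\<^sup>2 * B\<^sup>2 / 8))" for \<omega>
    unfolding increment_def by (simp add: exp_add[symmetric])
  have int: "integrable M (\<lambda>\<omega>. exp (l * (X s \<omega> - \<mu>)))"
    using exp_increment_integrable[OF assms(1), of l] unfolding split by simp
  have "ennreal (\<integral>\<omega>. exp (l * (X s \<omega> - \<mu>)) \<partial>M) = (\<integral>\<^sup>+\<omega>. exp (l * (X s \<omega> - \<mu>)) \<partial>M)"
    by (rule nn_integral_eq_integral[symmetric]) (use int in auto)
  also have "\<dots> \<le> ennreal (exp (l\<^sup>2 * (B - 0)\<^sup>2 / 8))"
    using I.Hoeffdings_lemma_nn_integral[OF assms(2)] X_mean[OF assms(1)] by simp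
  finally have "(\<integral>\<omega>. exp (l * (X s \<omega> - \<mu>)) \<partial>M) \<le> exp (l\<^sup>2 * B\<^sup>2 / 8)"
    by (subst (asm) ennreal_le_iff) auto
  then have "(\<integral>\<omega>. exp (l * (X s \<omega> - \<mu>)) \<partial>M) * exp (- (l\<^sup>2 * B\<^sup>2 / 8))
      \<le> exp (l\<^sup>2 * B\<^sup>2 / 8) * exp (- (l\<^sup>2 * B\<^sup>2 / 8))"
    by (intro mult_right_mono) auto
  then show ?thesis unfolding split by (simp add: exp_minus)
qed

lemma exp_process_Suc:
  assumes "1 \<le> t0" "t0 \<le> n" "\<omega> \<in> space M"
  shows "exp_process l t0 (Suc n) \<omega>
    = exp_process l t0 n \<omega> + (exp (increment l n \<omega>) - 1) * (exp_process l t0 n \<omega> * eps n \<omega>)"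
proof -
  have "exp_process l t0 (Suc n) \<omega> = exp_process l t0 n \<omega> * exp (eps n \<omega> * increment l n \<omega>)"
    unfolding exp_process_def using assms by (simp add: exp_add)
  moreover have "eps n \<omega> = 0 \<or> eps n \<omega> = 1" using eps_01[of n \<omega>] assms by auto
  ultimately show ?thesis by (auto simp: algebra_simps)
qed

lemma selected_weight:
  assumes t0: "1 \<le> t0" "t0 \<le> n"
  shows "(\<lambda>\<omega>. exp_process l t0 n \<omega> * eps n \<omega>) \<in> borel_measurable (F (n - 1))"
    and "integrable M (\<lambda>\<omega>. exp_process l t0 n \<omega> * eps n \<omega>)"
    and "0 \<le> (\<integral>\<omega>. exp_process l t0 n \<omega> * eps n \<omega> \<partial>M)"
proof -
  have eps_n: "eps n \<omega> = 0 \<or> eps n \<omega> = 1" if "\<omega> \<in> space M" for \<omega>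
    using eps_01[of n \<omega>] that t0 by auto
  have "eps n \<in> borel_measurable (F (n - 1))" using eps_measurable_later[of n n] t0 by simp
  then show F: "(\<lambda>\<omega>. exp_process l t0 n \<omega> * eps n \<omega>) \<in> borel_measurable (F (n - 1))"
    using exp_process_measurable[OF t0(1), of l n] by measurable
  show "integrable M (\<lambda>\<omega>. exp_process l t0 n \<omega> * eps n \<omega>)"
  proof (rule Bochner_Integration.integrable_bound[OF exp_process_integrable[OF t0(1)]])
    show "(\<lambda>\<omega>. exp_process l t0 n \<omega> * eps n \<omega>) \<in> borel_measurable M"
      by (rule measurable_from_subalg[OF F_sub F])
    show "AE \<omega> in M. norm (exp_process l t0 n \<omega> * eps n \<omega>) \<le> norm (exp_process l t0 n \<omega>)"
    proof (rule AE_I2)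
      fix \<omega> assume "\<omega> \<in> space M"
      then have "eps n \<omega> = 0 \<or> eps n \<omega> = 1" by (rule eps_n)
      then show "norm (exp_process l t0 n \<omega> * eps n \<omega>) \<le> norm (exp_process l t0 n \<omega>)" by auto
    qed
  qed
  show "0 \<le> (\<integral>\<omega>. exp_process l t0 n \<omega> * eps n \<omega> \<partial>M)"
  proof (intro integral_nonneg_AE AE_I2)
    fix \<omega> assume "\<omega> \<in> space M"
    then have "eps n \<omega> = 0 \<or> eps n \<omega> = 1" by (rule eps_n)
    then show "0 \<le> exp_process l t0 n \<omega> * eps n \<omega>" using exp_process_nonneg[of l t0 n \<omega>] by auto
  qed
qed

text \<open>With \<open>g = exp \<circ> increment - 1\<close>, \<open>Z\<^sub>n\<^sub>+\<^sub>1 = Z\<^sub>n + g(X\<^sub>n) Z\<^sub>n \<epsilon>\<^sub>n\<close>;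
  by independence of \<open>X\<^sub>n\<close> from \<open>F\<^sub>n\<^sub>-\<^sub>1\<close> the last term has mean \<open>E[g(X\<^sub>n)] E[Z\<^sub>n \<epsilon>\<^sub>n]\<close>,
  a nonpositive times a nonnegative number.\<close>

lemma exp_process_step:
  assumes t0: "1 \<le> t0" "t0 \<le> n" and l: "l > 0"
  shows "integral\<^sup>L M (exp_process l t0 (Suc n)) \<le> integral\<^sup>L M (exp_process l t0 n)"
proof -
  let ?Z = "exp_process l t0" and ?W = "\<lambda>\<omega>. exp_process l t0 n \<omega> * eps n \<omega>"
  have n1: "n \<ge> 1" using t0 by simp
  define g where "g x = exp (l * (x - \<mu>) - l\<^sup>2 * B\<^sup>2 / 8) - 1" for x
  have g_X: "g (X n \<omega>) = exp (increment l n \<omega>) - 1" for \<omega>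
    unfolding g_def increment_def ..
  note W = selected_weight[OF t0, of l]
  have recursion: "?Z (Suc n) \<omega> = ?Z n \<omega> + g (X n \<omega>) * ?W \<omega>" if "\<omega> \<in> space M" for \<omega>
    unfolding g_X by (rule exp_process_Suc[OF t0 that])
  have int_Z: "integrable M (?Z n)" "integrable M (?Z (Suc n))"
    using exp_process_integrable t0 by auto
  have int_g: "integrable M (\<lambda>\<omega>. g (X n \<omega>))"
    unfolding g_X using exp_increment_integrable[OF n1, of l] by simp
  have "(\<integral>\<omega>. g (X n \<omega>) \<partial>M) \<le> 0"
    unfolding g_X using exp_increment_integrable[OF n1, of l] exp_increment_integral_le_1[OF n1 l]
    by (simp add: prob_space)
  then have cross: "(\<integral>\<omega>. g (X n \<omega>) \<partial>M) * integral\<^sup>L M ?W \<le> 0"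
    using W(3) by (rule mult_nonpos_nonneg)
  have "integrable M (\<lambda>\<omega>. g (X n \<omega>) * ?W \<omega>) = integrable M (\<lambda>\<omega>. ?Z (Suc n) \<omega> - ?Z n \<omega>)"
    by (rule Bochner_Integration.integrable_cong) (auto simp: recursion)
  then have int_gW: "integrable M (\<lambda>\<omega>. g (X n \<omega>) * ?W \<omega>)" using int_Z by auto
  have "integral\<^sup>L M (?Z (Suc n)) = integral\<^sup>L M (\<lambda>\<omega>. ?Z n \<omega> + g (X n \<omega>) * ?W \<omega>)"
    by (rule Bochner_Integration.integral_cong) (auto simp: recursion)
  also have "\<dots> = integral\<^sup>L M (?Z n) + (\<integral>\<omega>. g (X n \<omega>) * ?W \<omega> \<partial>M)"
    by (rule Bochner_Integration.integral_add[OF int_Z(1) int_gW])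
  also have "(\<integral>\<omega>. g (X n \<omega>) * ?W \<omega> \<partial>M) = (\<integral>\<omega>. g (X n \<omega>) \<partial>M) * integral\<^sup>L M ?W"
  proof (rule indep_set_integral_mult[OF F_indep F_sub X_meas[OF n1] _ W(1) int_g W(2)])
    show "n - 1 < n" using n1 by simp
    show "g \<in> borel_measurable borel" unfolding g_def by measurable
  qed
  finally show ?thesis using cross by simp
qed

lemma exp_process_integral_le_1:
  assumes "1 \<le> t0" "t0 \<le> n" "l > 0"
  shows "integral\<^sup>L M (exp_process l t0 n) \<le> 1"
  using assms(2)
proof (induction n rule: dec_induct)
  case base
  then show ?case by (simp add: exp_process_def prob_space)
next
  case (step n)
  then show ?case using exp_process_step[OF assms(1) step(1) assms(3)] by linarith
qed

text \<open>Ville-type tail bound at a fixed time, by Markov's inequality.\<close>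

lemma exp_process_tail:
  assumes "1 \<le> t0" "t0 \<le> n" "l > 0"
  shows "measure M {\<omega> \<in> space M. exp g \<le> exp_process l t0 n \<omega>} \<le> exp (- g)"
proof -
  have "measure M {\<omega> \<in> space M. exp g \<le> exp_process l t0 n \<omega>}
      \<le> (\<integral>\<omega>. exp_process l t0 n \<omega> \<partial>M) / exp g"
    by (rule integral_Markov_inequality_measure[OF exp_process_integrable[OF assms(1)] sets.top])
      (auto simp: exp_process_nonneg)
  also have "\<dots> \<le> 1 / exp g"
    using exp_process_integral_le_1[OF assms] by (intro divide_right_mono) auto
  finally show ?thesis by (simp add: exp_minus inverse_eq_divide)
qed

lemma exp_process_closed_form:
  "exp_process l t0 (Suc t) \<omega> = exp (l * (\<Sum>s\<in>{t0..t}. (X s \<omega> - \<mu>) * eps s \<omega>)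
      - l\<^sup>2 * B\<^sup>2 / 8 * (\<Sum>s\<in>{t0..t}. eps s \<omega>))"
proof -
  have "{t0..<Suc t} = {t0..t}" by auto
  moreover have "(\<Sum>s\<in>{t0..t}. eps s \<omega> * increment l s \<omega>)
      = (\<Sum>s\<in>{t0..t}. l * ((X s \<omega> - \<mu>) * eps s \<omega>) - l\<^sup>2 * B\<^sup>2 / 8 * eps s \<omega>)"
    unfolding increment_def by (rule sum.cong) (simp_all add: algebra_simps)
  ultimately show ?thesis
    unfolding exp_process_def by (simp add: sum_subtractf sum_distrib_left)
qed

lemma selection_count_bounds:
  assumes "1 \<le> t0" "\<omega> \<in> space M" "(\<Sum>s\<in>{t0..t}. eps s \<omega>) > 0"
  shows "1 \<le> (\<Sum>s\<in>{t0..t}. eps s \<omega>)" "(\<Sum>s\<in>{t0..t}. eps s \<omega>) \<le> real (card {t0..t})"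
proof -
  have e01: "eps s \<omega> \<in> {0, 1}" if "s \<in> {t0..t}" for s
    using eps_01[OF _ assms(2)] that assms(1) by auto
  have "\<exists>s\<in>{t0..t}. eps s \<omega> \<noteq> 0"
    using assms(3) by (metis (mono_tags) less_irrefl sum.neutral)
  then obtain s where s: "s \<in> {t0..t}" "eps s \<omega> \<noteq> 0" by blast
  then have "eps s \<omega> = 1" using e01 by auto
  moreover have "eps s \<omega> \<le> (\<Sum>s\<in>{t0..t}. eps s \<omega>)"
  proof (rule member_le_sum)
    show "0 \<le> eps s' \<omega>" if "s' \<in> {t0..t} - {s}" for s' using e01[of s'] that by auto
  qed (use s in auto)
  ultimately show "1 \<le> (\<Sum>s\<in>{t0..t}. eps s \<omega>)" by simp
  have "(\<Sum>s\<in>{t0..t}. eps s \<omega>) \<le> (\<Sum>s\<in>{t0..t}. 1)"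
  proof (rule sum_mono)
    show "eps s \<omega> \<le> 1" if "s \<in> {t0..t}" for s using e01[OF that] by auto
  qed
  then show "(\<Sum>s\<in>{t0..t}. eps s \<omega>) \<le> real (card {t0..t})" by simp
qed

end

section \<open>Peeling over geometric slices\<close>

lemma exists_geometric_slice:
  fixes b y :: real
  assumes "b > 1" "1 \<le> y" "y \<le> b ^ D" "D \<ge> 1"
  shows "\<exists>k<D. b ^ k \<le> y \<and> y \<le> b ^ (k + 1)"
  using assms(3,4)
proof (induction D)
  case 0
  then show ?case by simp
next
  case (Suc D)
  show ?case
  proof (cases "y \<le> b ^ D \<and> D \<ge> 1")
    case True
    then obtain k where "k < D" "b ^ k \<le> y \<and> y \<le> b ^ (k + 1)" using Suc.IH by blast
    then show ?thesis by (intro exI[of _ k]) auto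
  next
    case False
    then have "b ^ D \<le> y" using assms(2) by (cases "D = 0") auto
    then show ?thesis using Suc.prems(1) by (intro exI[of _ D]) auto
  qed
qed
text \<open>The slice ratio \<open>q = (1+\<eta>)^(1/4)\<close> satisfies \<open>1 \<le> q \<le> 1 + \<eta>/4\<close> (Bernoulli).\<close>

lemma fourth_root_bounds:
  fixes \<eta> :: real
  assumes "\<eta> > 0"
  shows "root 4 (1 + \<eta>) ^ 4 = 1 + \<eta>" "1 \<le> root 4 (1 + \<eta>)" "root 4 (1 + \<eta>) \<le> 1 + \<eta> / 4"
proof -
  show q4: "root 4 (1 + \<eta>) ^ 4 = 1 + \<eta>" using assms by (intro real_root_pow_pos2) auto
  show "1 \<le> root 4 (1 + \<eta>)" using assms by simp
  have "1 + real 4 * (\<eta> / 4) \<le> (1 + \<eta> / 4) ^ 4"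
    using assms by (intro Bernoulli_inequality) auto
  then have "root 4 (1 + \<eta>) ^ 4 \<le> (1 + \<eta> / 4) ^ 4" unfolding q4 by simp
  then show "root 4 (1 + \<eta>) \<le> 1 + \<eta> / 4"
    using assms power_strict_mono[of "1 + \<eta> / 4" "root 4 (1 + \<eta>)" 4] by fastforce
qed

text \<open>If \<open>x\<close> is within a factor \<open>q \<le> 1 + \<eta>/4\<close> of the centre \<open>c\<close> of its slice, the rate
  \<open>4\<delta>/(B\<^sup>2 c)\<close> loses at most a factor \<open>1 - \<eta>\<^sup>2/16\<close> against the optimal exponent \<open>2\<delta>\<^sup>2/B\<^sup>2\<close>.\<close>

lemma peeling_exponent_bound:
  fixes x c q \<eta> \<delta> B S :: real
  assumes x: "x > 0" and c: "c > 0" and q: "1 \<le> q" "q \<le> 1 + \<eta> / 4"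
    and xc: "c / q \<le> x" "x \<le> c * q" and \<delta>: "\<delta> > 0" and B: "B \<noteq> 0"
    and S: "S > \<delta> * x"
  shows "2 * \<delta>\<^sup>2 / B\<^sup>2 * (1 - \<eta>\<^sup>2 / 16)
    \<le> (4 * \<delta> / (B\<^sup>2 * c)) * S - (4 * \<delta> / (B\<^sup>2 * c))\<^sup>2 * B\<^sup>2 / 8 * x\<^sup>2"
proof -
  define l where "l = 4 * \<delta> / (B\<^sup>2 * c)"
  define r where "r = x / c"
  have B2: "B\<^sup>2 > 0" using B by simp
  have l: "l > 0" unfolding l_def using \<delta> c B2 by simp
  have r_upper: "r \<le> q" unfolding r_def using xc c by (simp add: divide_le_eq algebra_simps)
  have r_lower: "1 / q \<le> r" unfolding r_def using xc c q by (simp add: le_divide_eq field_simps)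
  have "q * (1 - 1 / q) = q - 1" using q by (simp add: field_simps)
  also have "\<dots> \<le> q * (q - 1)" using q mult_right_mono[of 1 q "q - 1"] by simp
  finally have "1 - 1 / q \<le> q - 1" using q by simp
  then have "\<bar>1 - r\<bar> \<le> \<eta> / 4" using r_upper r_lower q by (intro abs_leI) linarith+
  then have "(1 - r)\<^sup>2 \<le> (\<eta> / 4)\<^sup>2" by (metis abs_ge_zero power2_abs power_mono)
  then have "2 * \<delta>\<^sup>2 / B\<^sup>2 * (1 - \<eta>\<^sup>2 / 16) \<le> 2 * \<delta>\<^sup>2 / B\<^sup>2 * (1 - (1 - r)\<^sup>2)"
    using B2 by (intro mult_left_mono) (auto simp: power_divide)
  also have "\<dots> = l * (\<delta> * x) - l\<^sup>2 * B\<^sup>2 / 8 * x\<^sup>2"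
    unfolding l_def r_def using c B2 by (simp add: field_simps power2_eq_square)
  also have "\<dots> \<le> l * S - l\<^sup>2 * B\<^sup>2 / 8 * x\<^sup>2" using l S by simp
  finally show ?thesis unfolding l_def .
qed

text \<open>The rate used on slice \<open>k\<close>: \<open>q^(2k+1)\<close> with \<open>q = (1+\<eta>)^(1/4)\<close> is the geometric centre of
  the range \<open>[(1+\<eta>)^(k/2), (1+\<eta>)^((k+1)/2)]\<close> of \<open>\<surd>N\<close> on that slice.\<close>

definition slice_rate :: "real \<Rightarrow> real \<Rightarrow> real \<Rightarrow> nat \<Rightarrow> real" where
  "slice_rate \<delta> \<eta> B k = 4 * \<delta> / (B\<^sup>2 * root 4 (1 + \<eta>) ^ (2 * k + 1))"

lemma slice_rate_pos: "\<delta> > 0 \<Longrightarrow> \<eta> > 0 \<Longrightarrow> B \<noteq> 0 \<Longrightarrow> slice_rate \<delta> \<eta> B k > 0"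
  unfolding slice_rate_def by simp

lemma peeling_cover:
  fixes N S \<delta> \<eta> B :: real
  assumes \<eta>: "\<eta> > 0" and \<delta>: "\<delta> > 0" and B: "B \<noteq> 0" and D: "D \<ge> 1"
    and N: "1 \<le> N" "N \<le> (1 + \<eta>) ^ D" and S: "S > \<delta> * sqrt N"
  shows "\<exists>k<D. 2 * \<delta>\<^sup>2 / B\<^sup>2 * (1 - \<eta>\<^sup>2 / 16)
           \<le> slice_rate \<delta> \<eta> B k * S - (slice_rate \<delta> \<eta> B k)\<^sup>2 * B\<^sup>2 / 8 * N"
proof -
  define q where "q = root 4 (1 + \<eta>)"
  note q_bounds = fourth_root_bounds[OF \<eta>, folded q_def]
  have q_sq: "(q ^ (2 * j))\<^sup>2 = (1 + \<eta>) ^ j" for j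
    unfolding q_bounds(1)[symmetric] power_mult[symmetric] by (simp add: mult.commute)
  obtain k where k: "k < D" "(1 + \<eta>) ^ k \<le> N" "N \<le> (1 + \<eta>) ^ (k + 1)"
    using exists_geometric_slice[of "1 + \<eta>" N D] \<eta> N D by auto
  define x where "x = sqrt N"
  define c where "c = q ^ (2 * k + 1)"
  have x: "x > 0" "x\<^sup>2 = N" unfolding x_def using N by auto
  have c: "c > 0" unfolding c_def using q_bounds by simp
  have "c / q = q ^ (2 * k)" unfolding c_def using q_bounds by auto
  moreover have "q ^ (2 * k) \<le> x"
    by (rule power2_le_imp_le) (use q_sq[of k] k x in auto)
  moreover have "c * q = q ^ (2 * (k + 1))" unfolding c_def by simp
  moreover have "x \<le> q ^ (2 * (k + 1))"
    by (rule power2_le_imp_le) (use q_sq[of "k + 1"] k x q_bounds in auto)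
  ultimately have "c / q \<le> x" "x \<le> c * q" by linarith+
  then have "2 * \<delta>\<^sup>2 / B\<^sup>2 * (1 - \<eta>\<^sup>2 / 16)
      \<le> (4 * \<delta> / (B\<^sup>2 * c)) * S - (4 * \<delta> / (B\<^sup>2 * c))\<^sup>2 * B\<^sup>2 / 8 * x\<^sup>2"
    using S q_bounds by (intro peeling_exponent_bound[OF x(1) c _ _ _ _ \<delta> B]) (auto simp: x_def)
  then show ?thesis
    using k(1) unfolding x(2) c_def q_def slice_rate_def by auto
qed

lemma slice_count:
  fixes \<eta> :: real
  assumes "\<eta> > 0" "m \<ge> 2"
  defines "D \<equiv> nat \<lceil>ln (real m) / ln (1 + \<eta>)\<rceil>"
  shows "real_of_int \<lceil>ln (real m) / ln (1 + \<eta>)\<rceil> = real D" "D \<ge> 1" "real m \<le> (1 + \<eta>) ^ D"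
proof -
  have ln_eta: "ln (1 + \<eta>) > 0" using assms by (intro ln_gt_zero) auto
  have ratio: "ln (real m) / ln (1 + \<eta>) > 0" using assms ln_eta by (simp add: ln_gt_zero)
  show D: "real_of_int \<lceil>ln (real m) / ln (1 + \<eta>)\<rceil> = real D"
    unfolding D_def using ratio by simp
  show "D \<ge> 1" unfolding D_def using ratio by (simp add: Suc_le_eq)
  have "ln (real m) / ln (1 + \<eta>) \<le> real D" using D le_of_int_ceiling by metis
  then have "ln (real m) \<le> real D * ln (1 + \<eta>)" using ln_eta by (simp only: divide_le_eq)
  also have "\<dots> = ln ((1 + \<eta>) ^ D)" using assms by (simp add: ln_realpow)
  finally show "real m \<le> (1 + \<eta>) ^ D" using assms by (subst (asm) ln_le_cancel_iff) auto
qed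

section \<open>The self-normalized deviation bound\<close>

context predictable_sampling
begin

text \<open>Peeling plus a union bound over the slice rates: on any window of length at most
  \<open>(1+\<eta>)^D\<close> the self-normalized deviation exceeds \<open>\<delta>\<close> with probability at most
  \<open>D exp(-2\<delta>\<^sup>2/B\<^sup>2 (1 - \<eta>\<^sup>2/16))\<close>.\<close>

lemma window_deviation_bound:
  assumes t0: "1 \<le> t0" "t0 \<le> t" and \<delta>: "\<delta> > 0" and \<eta>: "\<eta> > 0"
    and D: "D \<ge> 1" "real (card {t0..t}) \<le> (1 + \<eta>) ^ D"
  shows "measure M {\<omega> \<in> space M. (\<Sum>s\<in>{t0..t}. eps s \<omega>) > 0 \<and>
            (\<Sum>s\<in>{t0..t}. (X s \<omega> - \<mu>) * eps s \<omega>) / sqrt (\<Sum>s\<in>{t0..t}. eps s \<omega>) > \<delta>}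
         \<le> real D * exp (- (2 * \<delta>\<^sup>2 / B\<^sup>2) * (1 - \<eta>\<^sup>2 / 16))"
    (is "measure M ?A \<le> _")
proof (cases "B = 0")
  case True
  have "measure M ?A \<le> real D" using prob_le_1[of ?A] D(1) by linarith
  then show ?thesis using True by simp
next
  case B: False
  define \<gamma> where "\<gamma> = 2 * \<delta>\<^sup>2 / B\<^sup>2 * (1 - \<eta>\<^sup>2 / 16)"
  define E where "E k = {\<omega> \<in> space M. exp \<gamma> \<le> exp_process (slice_rate \<delta> \<eta> B k) t0 (Suc t) \<omega>}"
    for k
  have cover: "?A \<subseteq> (\<Union>k<D. E k)"
  proof
    fix \<omega> assume "\<omega> \<in> ?A"
    then have \<omega>: "\<omega> \<in> space M" and pos: "(\<Sum>s\<in>{t0..t}. eps s \<omega>) > 0"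
      and ratio: "(\<Sum>s\<in>{t0..t}. (X s \<omega> - \<mu>) * eps s \<omega>) / sqrt (\<Sum>s\<in>{t0..t}. eps s \<omega>) > \<delta>"
      by auto
    have dev: "(\<Sum>s\<in>{t0..t}. (X s \<omega> - \<mu>) * eps s \<omega>) > \<delta> * sqrt (\<Sum>s\<in>{t0..t}. eps s \<omega>)"
      using ratio pos by (simp add: pos_less_divide_eq)
    note count = selection_count_bounds[OF t0(1) \<omega> pos]
    have "(\<Sum>s\<in>{t0..t}. eps s \<omega>) \<le> (1 + \<eta>) ^ D" using count(2) D(2) by linarith
    then have "\<exists>k<D. \<gamma> \<le> slice_rate \<delta> \<eta> B k * (\<Sum>s\<in>{t0..t}. (X s \<omega> - \<mu>) * eps s \<omega>)
        - (slice_rate \<delta> \<eta> B k)\<^sup>2 * B\<^sup>2 / 8 * (\<Sum>s\<in>{t0..t}. eps s \<omega>)"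
      unfolding \<gamma>_def by (rule peeling_cover[OF \<eta> \<delta> B D(1) count(1) _ dev])
    then show "\<omega> \<in> (\<Union>k<D. E k)"
      using \<omega> unfolding E_def exp_process_closed_form by auto
  qed
  have E_sets: "E k \<in> sets M" for k
    unfolding E_def by (rule borel_measurable_le[OF borel_measurable_const exp_process_borel[OF t0(1)]])
  have "measure M ?A \<le> measure M (\<Union>k<D. E k)"
    using E_sets by (intro finite_measure_mono[OF cover] sets.finite_UN) auto
  also have "\<dots> \<le> (\<Sum>k<D. measure M (E k))"
    using E_sets by (intro finite_measure_subadditive_finite) auto
  also have "\<dots> \<le> (\<Sum>k<D. exp (- \<gamma>))"
    unfolding E_def using t0 \<delta> \<eta> B by (intro sum_mono exp_process_tail slice_rate_pos) auto
  finally show ?thesis unfolding \<gamma>_def by simp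
qed

end

text \<open>The theorem: the window \<open>{max 1 (t - \<tau> + 1)..t}\<close> has length \<open>min t \<tau>\<close>, which
  \<open>\<lceil>ln (min t \<tau>) / ln (1 + \<eta>)\<rceil>\<close> geometric slices cover.\<close>

theorem mainTheorem7:
  fixes M :: "'a measure" and X :: "nat \<Rightarrow> 'a \<Rightarrow> real" and eps :: "nat \<Rightarrow> 'a \<Rightarrow> real"
    and F :: "nat \<Rightarrow> 'a measure" and B \<mu> :: real and t \<tau> :: nat and \<delta> \<eta> :: real
  assumes M: "prob_space M"
    and X_meas: "\<And>s. s \<ge> 1 \<Longrightarrow> X s \<in> borel_measurable M"
    and X_indep: "prob_space.indep_vars M (\<lambda>_. borel) X {1..}"
    and X_bdd: "\<And>s. s \<ge> 1 \<Longrightarrow> AE \<omega> in M. 0 \<le> X s \<omega> \<and> X s \<omega> \<le> B"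
    and X_mean: "\<And>s. s \<ge> 1 \<Longrightarrow> integral\<^sup>L M (X s) = \<mu>"
    and F_filt: "filtration (space M) F"
    and F_sub: "\<And>n. subalgebra M (F n)"
    and F_adapt: "\<And>s n. 1 \<le> s \<Longrightarrow> s \<le> n \<Longrightarrow> X s \<in> borel_measurable (F n)"
    and F_indep: "\<And>s n. n < s \<Longrightarrow>
        prob_space.indep_set M (sets (vimage_algebra (space M) (X s) borel)) (sets (F n))"
    and eps_01: "\<And>s \<omega>. s \<ge> 1 \<Longrightarrow> \<omega> \<in> space M \<Longrightarrow> eps s \<omega> \<in> {0, 1}"
    and eps_pred: "\<And>s. s \<ge> 1 \<Longrightarrow> eps s \<in> borel_measurable (F (s - 1))"
    and t: "t \<ge> 1" and tau: "\<tau> \<ge> 1" and min2: "min t \<tau> \<ge> 2"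
    and delta: "\<delta> > 0" and eta: "\<eta> > 0"
  shows "measure M {\<omega> \<in> space M.
            (\<Sum>s\<in>{max 1 (t - \<tau> + 1)..t}. eps s \<omega>) > 0 \<and>
            (\<Sum>s\<in>{max 1 (t - \<tau> + 1)..t}. (X s \<omega> - \<mu>) * eps s \<omega>)
              / sqrt (\<Sum>s\<in>{max 1 (t - \<tau> + 1)..t}. eps s \<omega>) > \<delta>}
         \<le> real_of_int \<lceil>ln (real (min t \<tau>)) / ln (1 + \<eta>)\<rceil>
            * exp (- (2 * \<delta>\<^sup>2 / B\<^sup>2) * (1 - \<eta>\<^sup>2 / 16))"
proof -
  interpret predictable_sampling M X eps F B \<mu>
    using M X_meas X_bdd X_mean F_filt F_sub F_adapt F_indep eps_01 eps_pred
    unfolding predictable_sampling_def predictable_sampling_axioms_def by blast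
  have window: "card {max 1 (t - \<tau> + 1)..t} = min t \<tau>"
    using t tau by (auto simp: max_def min_def)
  note slices = slice_count[OF eta min2]
  show ?thesis
    unfolding slices(1)
  proof (rule window_deviation_bound[OF _ _ delta eta slices(2)])
    show "1 \<le> max 1 (t - \<tau> + 1)" "max 1 (t - \<tau> + 1) \<le> t" using t tau by auto
    show "real (card {max 1 (t - \<tau> + 1)..t}) \<le> (1 + \<eta>) ^ nat \<lceil>ln (real (min t \<tau>)) / ln (1 + \<eta>)\<rceil>"
      unfolding window by (rule slices(3))
  qed
qed

end
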